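(* Let $\ell$ be a prime and let $R,S,T$ be pairwise coprime positive integers. Let $S'=\prod_{q:\ \operatorname{ord}_q(S)\text{ odd}} q$, let $v$ be the positive integer with $SS'=v^2$, let $u=RS'$, and write $TS'=mn^2$ with $m$ a squarefree positive integer and $n$ a positive integer. Let $K=\mathbb{Q}(\sqrt{-m})$ with ring of integers $\mathcal{O}$, and let $\epsilon\in K^*$ be a representative of an element of $\mathcal{E}$. Let $q=2k\ell+1$ be a prime ($k$ a positive integer) such that $q\mathcal{O}=\mathfrak{q}_1\mathfrak{q}_2$ with $\mathfrak{q}_1\neq\mathfrak{q}_2$ and $\operatorname{ord}_{\mathfrak{q}_j}(\epsilon)=0$ for $j=1,2$. Let $\chi(\ell,q)=\{\eta^\ell:\eta\in\mathbb{F}_q\}$ and let $C(\ell,q)$ be the set of $\zeta\in\chi(\ell,q)$ such that, for each $j=1,2$, $\big((v\zeta+n\sqrt{-m})/\epsilon\big)^{2k}\equiv 0$ or $1\pmod{\mathfrak{q}_j}$ (where $\zeta$ is regarded as an element of $\mathcal{O}/\mathfrak{q}_j\cong\mathbb{F}_q$). If $C(\ell,q)=\emptyset$, then there are no $\sigma\in\mathbb{Z}$ and $\eta\in K$ satisfying \[ v\sigma^\ell+n\sqrt{-m}=\epsilon\eta^\ell . \]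
   Context: Let $\mathfrak{S}$ be the set of prime ideals of $\mathcal{O}$ dividing $u$ or $2n\sqrt{-m}$. The $\ell$-Selmer group is $K(\mathfrak{S},\ell)=\{\epsilon\in K^*/K^{*\ell}:\operatorname{ord}_{\mathfrak P}(\epsilon)\equiv 0\pmod\ell \text{ for all prime ideals }\mathfrak P\notin\mathfrak{S}\}$, and $\mathcal{E}=\{\epsilon\in K(\mathfrak{S},\ell): \operatorname{Norm}(\epsilon)/u\in\mathbb{Q}^{*\ell}\}$. *)

theory Defs
  imports Complex_Main "HOL-Computational_Algebra.Polynomial"
    "HOL-Computational_Algebra.Squarefree" "HOL-Algebra.Ideal_Product"
begin

(* The imaginary quadratic field K = Q(sqrt(-m)) is realised inside the complex numbers. *)

definition sqrt_neg :: "nat \<Rightarrow> complex" where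
  "sqrt_neg m = \<i> * complex_of_real (sqrt (real m))"

definition QF :: "nat \<Rightarrow> complex set" where
  "QF m = {complex_of_real (of_rat a) + complex_of_real (of_rat b) * sqrt_neg m | a b. True}"

definition OK :: "nat \<Rightarrow> complex set" where
  "OK m = {z \<in> QF m. algebraic_int z}"

definition OK_ring :: "nat \<Rightarrow> complex ring" where
  "OK_ring m = \<lparr>carrier = OK m, mult = (*), one = 1, zero = 0, add = (+)\<rparr>"

definition prime_ideal_OK :: "nat \<Rightarrow> complex set \<Rightarrow> bool" where
  "prime_ideal_OK m P \<longleftrightarrow> primeideal P (OK_ring m) \<and> P \<noteq> {0}"

fun ideal_pow :: "nat \<Rightarrow> complex set \<Rightarrow> nat \<Rightarrow> complex set" where
  "ideal_pow m P 0 = OK m"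
| "ideal_pow m P (Suc e) = ideal_prod (OK_ring m) P (ideal_pow m P e)"

definition ordO :: "nat \<Rightarrow> complex set \<Rightarrow> complex \<Rightarrow> nat" where
  "ordO m P a = (GREATEST e. a \<in> ideal_pow m P e)"

definition ordK :: "nat \<Rightarrow> complex set \<Rightarrow> complex \<Rightarrow> int" where
  "ordK m P x = (SOME e. \<exists>a b. a \<in> OK m - {0} \<and> b \<in> OK m - {0} \<and> x = a / b
                     \<and> e = int (ordO m P a) - int (ordO m P b))"

definition congP :: "nat \<Rightarrow> complex set \<Rightarrow> complex \<Rightarrow> complex \<Rightarrow> bool" where
  "congP m P x y \<longleftrightarrow> x = y \<or> ordK m P (x - y) \<ge> 1"

definition normK :: "complex \<Rightarrow> real" where
  "normK z = Re (z * cnj z)"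

definition Sset :: "nat \<Rightarrow> nat \<Rightarrow> nat \<Rightarrow> complex set set" where
  "Sset m n u = {P. prime_ideal_OK m P \<and>
      (complex_of_nat u \<in> P \<or> 2 * complex_of_nat n * sqrt_neg m \<in> P)}"

(* eps is a representative in K^* of an element of \<E> \<subseteq> K(\<frak>S, l) *)
definition in_E :: "nat \<Rightarrow> nat \<Rightarrow> nat \<Rightarrow> nat \<Rightarrow> complex \<Rightarrow> bool" where
  "in_E l m n u eps \<longleftrightarrow> eps \<in> QF m \<and> eps \<noteq> 0 \<and>
     (\<forall>P. prime_ideal_OK m P \<and> P \<notin> Sset m n u \<longrightarrow> int l dvd ordK m P eps) \<and>
     (\<exists>r::rat. r \<noteq> 0 \<and> normK eps / real u = of_rat (r ^ l))"

definition Sprime :: "nat \<Rightarrow> nat" where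
  "Sprime S = (\<Prod>p\<in>{p \<in> prime_factors S. odd (multiplicity p S)}. p)"

(* chi(l,q) = l-th powers in F_q, with F_q = {0..q-1} *)
definition chi :: "nat \<Rightarrow> nat \<Rightarrow> nat set" where
  "chi l q = {(e ^ l) mod q | e. e < q}"

(* C(l,q); the residue zeta is lifted to the integer zeta in {0..q-1} *)
definition Cset :: "nat \<Rightarrow> nat \<Rightarrow> nat \<Rightarrow> nat \<Rightarrow> nat \<Rightarrow> nat \<Rightarrow> complex \<Rightarrow> complex set \<Rightarrow> complex set \<Rightarrow> nat set" where
  "Cset l q k m n v eps q1 q2 = {\<zeta> \<in> chi l q. \<forall>Q \<in> {q1, q2}.
      congP m Q (((complex_of_nat v * complex_of_nat \<zeta> + complex_of_nat n * sqrt_neg m) / eps) ^ (2 * k)) 0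
    \<or> congP m Q (((complex_of_nat v * complex_of_nat \<zeta> + complex_of_nat n * sqrt_neg m) / eps) ^ (2 * k)) 1}"

end

theory Submission
  imports Defs "HOL-Number_Theory.Number_Theory"
begin

text \<open>Since \<open>q\<^sub>1 \<noteq> q\<^sub>2\<close>, the prime \<open>q\<close> is neither ramified nor inert in \<open>K\<close>, so it splits
  and both \<open>q\<^sub>j\<close> have residue field \<open>\<int>/q\<close>. Let \<open>\<zeta> \<in> \<chi>(l,q)\<close> be the residue of \<open>\<sigma>\<^sup>l\<close>.
  Reducing \<open>v \<sigma>\<^sup>l + n \<surd>-m = \<epsilon> \<eta>\<^sup>l\<close> modulo \<open>q\<^sub>j\<close> gives \<open>(v \<zeta> + n \<surd>-m)/\<epsilon> \<equiv> \<eta>\<^sup>l\<close>;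
  raising this to the power \<open>2k = (q - 1)/l\<close> gives \<open>0\<close> if \<open>q\<^sub>j\<close> divides \<open>\<eta>\<close> and
  \<open>\<eta>\<^sup>q\<^sup>-\<^sup>1 \<equiv> 1\<close> otherwise. So \<open>\<zeta> \<in> C(l,q)\<close>.\<close>

section \<open>Arithmetic of \<open>\<rat>(\<surd>-m)\<close>\<close>

lemma of_real_of_rat_complex: "complex_of_real (of_rat a) = of_rat a"
  by (cases a) (simp add: of_rat_rat)

lemma sqrt_neg_squared: "sqrt_neg m ^ 2 = - of_nat m"
  unfolding sqrt_neg_def by (simp add: power_mult_distrib flip: of_real_power)

lemma sqrt_neg_mult_self [simp]: "sqrt_neg m * sqrt_neg m = - of_nat m"
  using sqrt_neg_squared[of m] by (simp add: power2_eq_square)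

lemma sqrt_neg_mult_self_left [simp]: "sqrt_neg m * (sqrt_neg m * z) = - of_nat m * z"
  by (simp flip: mult.assoc)

lemma cnj_sqrt_neg [simp]: "cnj (sqrt_neg m) = - sqrt_neg m"
  unfolding sqrt_neg_def by simp

lemma of_int_add_sqrt_neg_nonzero:
  assumes "n > 0" "m > 0" shows "of_int a + of_nat n * sqrt_neg m \<noteq> 0"
proof
  assume "of_int a + of_nat n * sqrt_neg m = 0"
  then have "Im (of_int a + of_nat n * sqrt_neg m) = 0" by simp
  then show False using assms unfolding sqrt_neg_def by simp
qed

lemma QF_iff: "x \<in> QF m \<longleftrightarrow> (\<exists>a b. x = of_rat a + of_rat b * sqrt_neg m)"
  unfolding QF_def by (auto simp: of_real_of_rat_complex)

lemma QF_intro: "x = of_rat a + of_rat b * sqrt_neg m \<Longrightarrow> x \<in> QF m"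
  unfolding QF_iff by blast

lemma QF_add: assumes "x \<in> QF m" "y \<in> QF m" shows "x + y \<in> QF m"
proof -
  obtain a b c d where "x = of_rat a + of_rat b * sqrt_neg m" "y = of_rat c + of_rat d * sqrt_neg m"
    using assms unfolding QF_iff by blast
  then show ?thesis by (intro QF_intro[of _ "a + c" "b + d"]) (simp add: of_rat_add algebra_simps)
qed

lemma QF_uminus: assumes "x \<in> QF m" shows "- x \<in> QF m"
proof -
  obtain a b where "x = of_rat a + of_rat b * sqrt_neg m" using assms unfolding QF_iff by blast
  then show ?thesis by (intro QF_intro[of _ "- a" "- b"]) (simp add: of_rat_minus)
qed

lemma QF_diff: "x \<in> QF m \<Longrightarrow> y \<in> QF m \<Longrightarrow> x - y \<in> QF m"
  using QF_add[of x m "- y"] QF_uminus[of y m] by simp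

lemma QF_mult: assumes "x \<in> QF m" "y \<in> QF m" shows "x * y \<in> QF m"
proof -
  obtain a b c d where "x = of_rat a + of_rat b * sqrt_neg m" "y = of_rat c + of_rat d * sqrt_neg m"
    using assms unfolding QF_iff by blast
  then show ?thesis
    by (intro QF_intro[of _ "a * c - of_nat m * b * d" "a * d + b * c"])
      (simp add: of_rat_add of_rat_mult of_rat_diff algebra_simps)
qed

lemma QF_of_rat: "of_rat a \<in> QF m"
  by (rule QF_intro[of _ a 0]) simp

lemma QF_of_int: "of_int a \<in> QF m"
  using QF_of_rat[of "of_int a" m] by simp

lemma QF_of_nat: "of_nat a \<in> QF m"
  using QF_of_int[of "int a" m] by simp

lemma QF_1: "1 \<in> QF m"
  using QF_of_nat[of 1 m] by simp

lemma sqrt_neg_in_QF: "sqrt_neg m \<in> QF m"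
  by (rule QF_intro[of _ 0 1]) simp

lemma QF_cnj: assumes "x \<in> QF m" shows "cnj x \<in> QF m"
proof -
  obtain a b where "x = of_rat a + of_rat b * sqrt_neg m" using assms unfolding QF_iff by blast
  then show ?thesis
    by (intro QF_intro[of _ a "- b"]) (simp add: of_rat_minus flip: of_real_of_rat_complex)
qed

lemma QF_power: "x \<in> QF m \<Longrightarrow> x ^ n \<in> QF m"
  by (induction n) (auto simp: QF_mult QF_1)

lemma QF_mult_cnj:
  assumes "x \<in> QF m"
  obtains a b where "x = of_rat a + of_rat b * sqrt_neg m" "x * cnj x = of_rat (a * a + of_nat m * b * b)"
proof -
  obtain a b where x: "x = of_rat a + of_rat b * sqrt_neg m" using assms unfolding QF_iff by blast
  then have "x * cnj x = of_rat (a * a + of_nat m * b * b)"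
    by (simp add: of_rat_add of_rat_mult algebra_simps flip: of_real_of_rat_complex)
  with x show ?thesis using that by blast
qed

lemma QF_inverse: assumes "x \<in> QF m" shows "inverse x \<in> QF m"
proof (cases "x = 0")
  case False
  obtain a b where N: "x * cnj x = of_rat (a * a + of_nat m * b * b)"
    using QF_mult_cnj[OF assms] by blast
  have "inverse x = cnj x * inverse (x * cnj x)"
    using False by (simp add: field_simps)
  also have "\<dots> = cnj x * of_rat (inverse (a * a + of_nat m * b * b))"
    using N by (simp add: of_rat_inverse)
  finally show ?thesis using QF_mult QF_cnj QF_of_rat assms by metis
qed (simp add: QF_of_rat[of 0, simplified])

lemma QF_divide: "x \<in> QF m \<Longrightarrow> y \<in> QF m \<Longrightarrow> x / y \<in> QF m"
  by (simp add: divide_inverse QF_mult QF_inverse)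

lemma of_rat_in_Ints_imp: "(of_rat r :: complex) \<in> \<int> \<Longrightarrow> r \<in> \<int>"
  by (metis Ints_cases Ints_of_int of_rat_eq_iff of_rat_of_int_eq)

lemma squarefree_rat_integral:
  fixes c :: rat
  assumes "squarefree m" "c * c * of_nat m \<in> \<int>"
  shows "c \<in> \<int>"
proof -
  obtain p d where pd: "quotient_of c = (p, d)" by (cases "quotient_of c")
  have d0: "d > 0" and cop: "coprime p d" and c: "c = of_int p / of_int d"
    using quotient_of_denom_pos[OF pd] quotient_of_coprime[OF pd] quotient_of_div[OF pd] by auto
  from assms(2) obtain z where "c * c * of_nat m = of_int z" by (auto elim: Ints_cases)
  then have "of_int (p * p * int m) = (of_int (z * d * d) :: rat)"
    using d0 unfolding c by (simp add: field_simps)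
  then have "d * d dvd p * p * int m" by (simp only: of_int_eq_iff) simp
  moreover have "coprime (d * d) (p * p)" using cop by (simp add: coprime_commute)
  ultimately have "d * d dvd int m" by (simp add: coprime_dvd_mult_right_iff)
  then have "nat d ^ 2 dvd m" using d0 by (simp add: power2_eq_square flip: int_dvd_int_iff)
  then have "d = 1" using assms(1) d0 unfolding squarefree_def by fastforce
  then show ?thesis using c by simp
qed

section \<open>The ring of integers\<close>

locale imag_quadratic =
  fixes m :: nat
  assumes m_pos: "m > 0" and squarefree_m: "squarefree m" and cring_OK: "cring (OK_ring m)"
begin

lemma OK_ring_simps [simp]:
  "carrier (OK_ring m) = OK m" "mult (OK_ring m) = (*)" "add (OK_ring m) = (+)"
  "zero (OK_ring m) = 0" "one (OK_ring m) = 1"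
  by (simp_all add: OK_ring_def)

lemma ring_OK: "ring (OK_ring m)"
  using cring_OK cring.axioms(1) by blast

lemma OK_QF: "x \<in> OK m \<Longrightarrow> x \<in> QF m"
  by (simp add: OK_def)

lemma OK_add: "x \<in> OK m \<Longrightarrow> y \<in> OK m \<Longrightarrow> x + y \<in> OK m"
  using ring.ring_simprules(1)[OF ring_OK, of x y] by simp

lemma OK_mult: "x \<in> OK m \<Longrightarrow> y \<in> OK m \<Longrightarrow> x * y \<in> OK m"
  using ring.ring_simprules(5)[OF ring_OK, of x y] by simp

lemma OK_of_int [simp]: "of_int c \<in> OK m"
  unfolding OK_def using QF_of_int int_imp_algebraic_int by auto

lemma OK_of_nat [simp]: "of_nat c \<in> OK m"
  using OK_of_int[of "int c"] by simp

lemma OK_1 [simp]: "1 \<in> OK m"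
  using OK_of_int[of 1] by simp

lemma OK_uminus: assumes "x \<in> OK m" shows "- x \<in> OK m"
proof -
  have "of_int (- 1) * x \<in> OK m" using OK_mult[OF OK_of_int assms] .
  then show ?thesis by simp
qed

lemma OK_diff: "x \<in> OK m \<Longrightarrow> y \<in> OK m \<Longrightarrow> x - y \<in> OK m"
  using OK_add OK_uminus by (metis diff_conv_add_uminus)

lemma OK_power: "x \<in> OK m \<Longrightarrow> x ^ n \<in> OK m"
  by (induction n) (auto simp: OK_mult)

lemma sqrt_neg_in_OK [simp]: "sqrt_neg m \<in> OK m"
proof -
  have "algebraic_int (sqrt_neg m)"
    by (rule algebraic_int.intros[of "[:of_nat m, 0, 1:]"]) (auto simp: coeff_pCons split: nat.splits)
  then show ?thesis unfolding OK_def using sqrt_neg_in_QF by auto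
qed

lemma OK_cnj: "x \<in> OK m \<Longrightarrow> cnj x \<in> OK m"
  unfolding OK_def using QF_cnj by auto

lemma OK_intro:
  assumes "x \<in> QF m" "x + cnj x \<in> \<int>" "x * cnj x \<in> \<int>" shows "x \<in> OK m"
proof -
  have "algebraic_int x"
    by (rule algebraic_int.intros[of "[:x * cnj x, -(x + cnj x), 1:]"])
      (use assms Ints_minus[OF assms(2)] in \<open>auto simp: coeff_pCons algebra_simps power2_eq_square split: nat.splits\<close>)
  then show ?thesis using assms unfolding OK_def by auto
qed

lemma OK_rational_integral: "x \<in> OK m \<Longrightarrow> x \<in> \<rat> \<Longrightarrow> x \<in> \<int>"
  unfolding OK_def using rational_algebraic_int_is_int by blast

lemma OK_trace_Ints: assumes x: "x \<in> OK m" shows "x + cnj x \<in> \<int>"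
proof -
  obtain a b where "x = of_rat a + of_rat b * sqrt_neg m" using x OK_QF QF_iff by blast
  then have "x + cnj x = of_rat (2 * a)" by (simp add: of_rat_mult flip: of_real_of_rat_complex)
  then show ?thesis using OK_rational_integral OK_add[OF x OK_cnj[OF x]] by simp
qed

lemma OK_norm_Ints: assumes x: "x \<in> OK m" shows "x * cnj x \<in> \<int>"
proof -
  obtain a b where "x * cnj x = of_rat (a * a + of_nat m * b * b)"
    using QF_mult_cnj OK_QF[OF x] by blast
  then show ?thesis using OK_rational_integral OK_mult[OF x OK_cnj[OF x]] by simp
qed

text \<open>This is where squarefreeness of \<open>m\<close> enters.\<close>

lemma OK_double_coords:
  assumes x: "x \<in> OK m" obtains A B :: int where "2 * x = of_int A + of_int B * sqrt_neg m"
proof -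
  obtain a b where ab: "x = of_rat a + of_rat b * sqrt_neg m"
    and N: "x * cnj x = of_rat (a * a + of_nat m * b * b)"
    using QF_mult_cnj OK_QF[OF x] by blast
  have "x + cnj x = of_rat (2 * a)" unfolding ab by (simp add: of_rat_mult flip: of_real_of_rat_complex)
  then have a2: "2 * a \<in> \<int>" using OK_trace_Ints[OF x] of_rat_in_Ints_imp by metis
  have n: "a * a + of_nat m * b * b \<in> \<int>" using OK_norm_Ints[OF x] N of_rat_in_Ints_imp by metis
  have "(2 * b) * (2 * b) * of_nat m = 4 * (a * a + of_nat m * b * b) - (2 * a) * (2 * a)"
    by (simp add: algebra_simps)
  also have "\<dots> \<in> \<int>"
  proof -
    have "(4::rat) \<in> \<int>" by simp
    then show ?thesis by (rule Ints_diff[OF Ints_mult[OF _ n] Ints_mult[OF a2 a2]])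
  qed
  finally have "2 * b \<in> \<int>" using squarefree_rat_integral[OF squarefree_m] by blast
  then obtain A B where "2 * a = of_int A" "2 * b = of_int B" using a2 by (auto elim!: Ints_cases)
  moreover have "2 * x = of_rat (2 * a) + of_rat (2 * b) * sqrt_neg m"
    unfolding ab by (simp add: of_rat_mult algebra_simps)
  ultimately show ?thesis using that by simp
qed

lemma norm_from_double_coords:
  assumes "2 * x = of_int A + of_int B * sqrt_neg m"
  shows "4 * (x * cnj x) = of_int (A * A + int m * B * B)"
proof -
  have "4 * (x * cnj x) = (2 * x) * cnj (2 * x)" by simp
  also have "\<dots> = of_int (A * A + int m * B * B)" unfolding assms by (simp add: algebra_simps)
  finally show ?thesis .
qed

lemma OK_intro_double_coords:
  assumes AB: "2 * y = of_int A + of_int B * sqrt_neg m" and "4 dvd A * A + int m * B * B"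
  shows "y \<in> OK m"
proof -
  have "y = of_rat (of_int A / 2) + of_rat (of_int B / 2) * sqrt_neg m"
    using AB by (simp add: of_rat_divide field_simps)
  then have "y \<in> QF m" by (rule QF_intro)
  have "cnj (2 * y) = of_int A - of_int B * sqrt_neg m" unfolding AB by simp
  then have "2 * (y + cnj y) = 2 * of_int A" using AB by (simp add: algebra_simps)
  then have "y + cnj y = of_int A" by (metis mult_cancel_left zero_neq_numeral)
  moreover obtain X where "A * A + int m * B * B = 4 * X" using assms(2) by blast
  then have "y * cnj y = of_int X" using norm_from_double_coords[OF AB] by simp
  ultimately show ?thesis using OK_intro \<open>y \<in> QF m\<close> by simp
qed

lemma QF_quotient_of_OK:
  assumes "x \<in> QF m" "x \<noteq> 0"
  obtains a b where "a \<in> OK m - {0}" "b \<in> OK m - {0}" "x = a / b"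
proof -
  obtain a b where x: "x = of_rat a + of_rat b * sqrt_neg m" using assms QF_iff by blast
  obtain p1 d1 where 1: "quotient_of a = (p1, d1)" by (cases "quotient_of a")
  obtain p2 d2 where 2: "quotient_of b = (p2, d2)" by (cases "quotient_of b")
  have d: "d1 > 0" "d2 > 0" using quotient_of_denom_pos[OF 1] quotient_of_denom_pos[OF 2] .
  have "of_int (d1 * d2) * x = of_int (p1 * d2) + of_int (p2 * d1) * sqrt_neg m"
    unfolding x quotient_of_div[OF 1] quotient_of_div[OF 2] using d
    by (simp add: of_rat_divide field_simps)
  also have "\<dots> \<in> OK m" using OK_add OK_mult by simp
  finally have "of_int (d1 * d2) * x \<in> OK m" .
  then show ?thesis
    by (intro that[of "of_int (d1 * d2) * x" "of_int (d1 * d2)"]) (use d assms(2) OK_of_int[of "d1 * d2"] in auto)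
qed

lemma ideal_subset_OK: "ideal I (OK_ring m) \<Longrightarrow> x \<in> I \<Longrightarrow> x \<in> OK m"
  using additive_subgroup.a_subset ideal_def by fastforce

lemma ideal_add: "ideal I (OK_ring m) \<Longrightarrow> a \<in> I \<Longrightarrow> b \<in> I \<Longrightarrow> a + b \<in> I"
  using additive_subgroup.a_closed[of I "OK_ring m" a b] unfolding ideal_def by simp

lemma ideal_mult_left: "ideal I (OK_ring m) \<Longrightarrow> a \<in> I \<Longrightarrow> x \<in> OK m \<Longrightarrow> x * a \<in> I"
  using ideal.I_l_closed[of I "OK_ring m" a x] by simp

lemma ideal_mult_right: "ideal I (OK_ring m) \<Longrightarrow> a \<in> I \<Longrightarrow> x \<in> OK m \<Longrightarrow> a * x \<in> I"
  using ideal.I_r_closed[of I "OK_ring m" a x] by simp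

lemma ideal_diff:
  assumes "ideal I (OK_ring m)" "a \<in> I" "b \<in> I" shows "a - b \<in> I"
proof -
  have "a + of_int (- 1) * b \<in> I" by (intro ideal_add ideal_mult_left assms OK_of_int)
  then show ?thesis by simp
qed

lemma ideal_pow_ideal: "ideal P (OK_ring m) \<Longrightarrow> ideal (ideal_pow m P e) (OK_ring m)"
  using ring.oneideal[OF ring_OK] ring.ideal_prod_is_ideal[OF ring_OK] by (induction e) simp_all

lemma ideal_pow_antimono:
  assumes "ideal P (OK_ring m)" "e \<le> e'" shows "ideal_pow m P e' \<subseteq> ideal_pow m P e"
  using assms(2)
proof (induction e' rule: dec_induct)
  case (step e')
  then show ?case
    using ring.ideal_prod_inter[OF ring_OK assms(1) ideal_pow_ideal[OF assms(1), of e']] by auto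
qed simp

lemma mult_mem_ideal_pow_Suc: "a \<in> P \<Longrightarrow> b \<in> ideal_pow m P e \<Longrightarrow> a * b \<in> ideal_pow m P (Suc e)"
  using ideal_prod.prod[of a P b "ideal_pow m P e" "OK_ring m"] by simp

lemma power_mem_ideal_pow: "a \<in> P \<Longrightarrow> a ^ e \<in> ideal_pow m P e"
  by (induction e) (use mult_mem_ideal_pow_Suc in auto)

lemma ideal_pow_1: assumes "ideal P (OK_ring m)" shows "ideal_pow m P 1 = P"
proof
  show "ideal_pow m P 1 \<subseteq> P"
    using ring.ideal_prod_inter[OF ring_OK assms ideal_pow_ideal[OF assms, of 0]] by auto
  show "P \<subseteq> ideal_pow m P 1" using mult_mem_ideal_pow_Suc[of _ P 1 0] by auto
qed

end

section \<open>Prime ideals above an odd prime\<close>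

locale prime_over_odd = imag_quadratic +
  fixes Q :: "complex set" and q :: nat
  assumes primeideal_Q: "primeideal Q (OK_ring m)" and prime_q: "prime q" and odd_q: "odd q"
    and q_in_Q: "of_nat q \<in> Q"
begin

lemma ideal_Q: "ideal Q (OK_ring m)"
  using primeideal_Q unfolding primeideal_def by blast

lemma Q_subset_OK: "x \<in> Q \<Longrightarrow> x \<in> OK m"
  using ideal_subset_OK[OF ideal_Q] .

lemma Q_add: "a \<in> Q \<Longrightarrow> b \<in> Q \<Longrightarrow> a + b \<in> Q"
  using ideal_add[OF ideal_Q] .

lemma Q_diff: "a \<in> Q \<Longrightarrow> b \<in> Q \<Longrightarrow> a - b \<in> Q"
  using ideal_diff[OF ideal_Q] .

lemma Q_mult_left: "a \<in> Q \<Longrightarrow> x \<in> OK m \<Longrightarrow> x * a \<in> Q"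
  using ideal_mult_left[OF ideal_Q] .

lemma Q_mult_right: "a \<in> Q \<Longrightarrow> x \<in> OK m \<Longrightarrow> a * x \<in> Q"
  using ideal_mult_right[OF ideal_Q] .

lemma Q_prime: "a \<in> OK m \<Longrightarrow> b \<in> OK m \<Longrightarrow> a * b \<in> Q \<Longrightarrow> a \<in> Q \<or> b \<in> Q"
  using primeideal.I_prime[OF primeideal_Q, of a b] by simp

lemma one_notin_Q: "1 \<notin> Q"
  using ideal.one_imp_carrier[OF ideal_Q] primeideal.I_notcarr[OF primeideal_Q] by auto

lemma q_gt_2: "q > 2"
  using prime_q odd_q by (metis dvd_refl even_numeral le_neq_implies_less prime_ge_2_nat)

lemma of_int_in_Q_iff: "of_int c \<in> Q \<longleftrightarrow> int q dvd c"
proof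
  assume "int q dvd c"
  then obtain k where "of_int c = of_int k * (of_nat q :: complex)" by fastforce
  then show "of_int c \<in> Q" using Q_mult_left[OF q_in_Q, of "of_int k"] by simp
next
  assume c: "of_int c \<in> Q"
  show "int q dvd c"
  proof (rule ccontr)
    assume "\<not> int q dvd c"
    then have "gcd (int q) c = 1" using prime_q by (simp add: prime_imp_coprime)
    then obtain a b where "a * int q + b * c = 1" by (metis bezout_int)
    then have "(1::complex) = of_int a * of_nat q + of_int b * of_int c"
      by (metis of_int_1 of_int_add of_int_mult of_int_of_nat_eq)
    moreover have "of_int a * of_nat q + of_int b * of_int c \<in> Q"
      by (intro Q_add Q_mult_left q_in_Q c OK_of_int)
    ultimately show False using one_notin_Q by simp
  qed
qed

text \<open>\<open>h = (q + 1)/2\<close> inverts \<open>2\<close> modulo \<open>q\<close>.\<close>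

lemma double_coords_mod_q:
  assumes "2 * x = of_int A + of_int B * sqrt_neg m"
  defines "h \<equiv> (int q + 1) div 2"
  shows "x = of_int (h * A) + of_int (h * B) * sqrt_neg m - of_nat q * x"
proof -
  have "2 * h = int q + 1" unfolding h_def using odd_q by presburger
  then have h: "2 * (of_int h :: complex) = of_nat q + 1"
    by (metis of_int_numeral of_int_mult of_int_add of_int_of_nat_eq of_int_1)
  have "of_int (h * A) + of_int (h * B) * sqrt_neg m = of_int h * (2 * x)"
    unfolding assms(1) by (simp add: algebra_simps)
  also have "\<dots> = (of_nat q + 1) * x" using h by (simp add: algebra_simps)
  finally show ?thesis by (simp add: algebra_simps)
qed

lemma coprime_q_half: "coprime (int q) ((int q + 1) div 2)"
proof -
  have "2 * ((int q + 1) div 2) = int q + 1" using odd_q by presburger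
  moreover have "coprime (int q) (int q + 1)" by simp
  ultimately show ?thesis by (metis coprime_commute coprime_mult_left_iff)
qed

lemma Q_eq_if_ramified:
  assumes "q dvd m"
  shows "Q = {x \<in> OK m. \<forall>A B. 2 * x = of_int A + of_int B * sqrt_neg m \<longrightarrow> int q dvd A}"
proof -
  have "of_int (- int m) \<in> Q" using assms by (simp only: of_int_in_Q_iff) simp
  then have "sqrt_neg m \<in> Q" using Q_prime[OF sqrt_neg_in_OK sqrt_neg_in_OK] by auto
  have mem_iff: "x \<in> Q \<longleftrightarrow> int q dvd A"
    if x: "x \<in> OK m" and AB: "2 * x = of_int A + of_int B * sqrt_neg m" for x A B
  proof -
    define h where "h = (int q + 1) div 2"
    have "of_int (h * B) * sqrt_neg m - of_nat q * x \<in> Q"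
      using \<open>sqrt_neg m \<in> Q\<close> x by (intro Q_diff Q_mult_left Q_mult_right q_in_Q OK_of_int)
    moreover have "x = of_int (h * A) + (of_int (h * B) * sqrt_neg m - of_nat q * x)"
      using double_coords_mod_q[OF AB] unfolding h_def by (simp only: add_diff_eq)
    ultimately have "x \<in> Q \<longleftrightarrow> of_int (h * A) \<in> Q"
      by (metis Q_add Q_diff add_diff_cancel_right')
    then show ?thesis
      unfolding of_int_in_Q_iff h_def using coprime_q_half by (simp add: coprime_dvd_mult_right_iff)
  qed
  show ?thesis
  proof (intro Set.set_eqI iffI)
    fix x assume "x \<in> {x \<in> OK m. \<forall>A B. 2 * x = of_int A + of_int B * sqrt_neg m \<longrightarrow> int q dvd A}"
    then have x: "x \<in> OK m" and dvd: "\<And>A B. 2 * x = of_int A + of_int B * sqrt_neg m \<Longrightarrow> int q dvd A"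
      by auto
    obtain A B where "2 * x = of_int A + of_int B * sqrt_neg m" using OK_double_coords[OF x] by blast
    then show "x \<in> Q" using mem_iff[OF x] dvd by blast
  qed (use mem_iff Q_subset_OK in auto)
qed

lemma Q_eq_if_inert:
  assumes no_root: "\<forall>r::int. \<not> int q dvd r\<^sup>2 + int m"
  shows "Q = {x \<in> OK m. x / of_nat q \<in> OK m}"
proof (intro Set.set_eqI iffI)
  fix x assume "x \<in> {x \<in> OK m. x / of_nat q \<in> OK m}"
  then have "of_nat q * (x / of_nat q) \<in> Q" using Q_mult_right[OF q_in_Q] by blast
  then show "x \<in> Q" using q_gt_2 by simp
next
  fix x assume xQ: "x \<in> Q"
  then have x: "x \<in> OK m" by (rule Q_subset_OK)
  obtain A B where AB: "2 * x = of_int A + of_int B * sqrt_neg m" using OK_double_coords[OF x] by blast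
  have "4 * (x * cnj x) \<in> Q"
    using Q_mult_left[OF Q_mult_right[OF xQ OK_cnj[OF x]] OK_of_nat[of 4]] by simp
  then have "of_int (A * A + int m * B * B) \<in> Q" using norm_from_double_coords[OF AB] by simp
  then have dvd_norm: "int q dvd A * A + int m * B * B" using of_int_in_Q_iff by blast
  have "int q dvd B"
  proof (rule ccontr)
    assume "\<not> int q dvd B"
    then have "gcd (int q) B = 1" using prime_q by (simp add: prime_imp_coprime)
    then obtain a b where "a * int q + b * B = 1" by (metis bezout_int)
    then have bB: "b * B = 1 - a * int q" by simp
    have "b * b * (A * A + int m * B * B) = (A * b)\<^sup>2 + int m * ((b * B) * (b * B))"
      by (simp add: algebra_simps power2_eq_square)
    also have "\<dots> = (A * b)\<^sup>2 + int m - int q * (int m * (2 * a - a * a * int q))"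
      unfolding bB by (simp add: algebra_simps power2_eq_square)
    finally have "(A * b)\<^sup>2 + int m = b * b * (A * A + int m * B * B) + int q * (int m * (2 * a - a * a * int q))"
      by simp
    then have "int q dvd (A * b)\<^sup>2 + int m" using dvd_norm by simp
    then show False using no_root by blast
  qed
  then obtain B' where B': "B = int q * B'" by blast
  then have "int q dvd A * A" using dvd_norm by (simp add: dvd_add_left_iff algebra_simps)
  then obtain A' where A': "A = int q * A'" using prime_q by (auto simp: prime_dvd_mult_iff)
  have AB': "2 * (x / of_nat q) = of_int A' + of_int B' * sqrt_neg m"
    using AB q_gt_2 unfolding A' B' by (simp add: field_simps)
  obtain N where "x * cnj x = of_int N" using OK_norm_Ints[OF x] by (auto elim: Ints_cases)
  then have "of_int (4 * N) = (of_int (A * A + int m * B * B) :: complex)"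
    using norm_from_double_coords[OF AB] by simp
  then have "4 * N = A * A + int m * B * B" by (simp only: of_int_eq_iff)
  also have "\<dots> = int q ^ 2 * (A' * A' + int m * B' * B')"
    unfolding A' B' by (simp add: algebra_simps power2_eq_square)
  finally have "4 dvd int q ^ 2 * (A' * A' + int m * B' * B')" by (metis dvd_triv_left)
  moreover have "coprime (4::int) (int q ^ 2)"
    using odd_q coprime_left_2_iff_odd[of "int q"] coprime_mult_left_iff[of 2 2 "int q"] by simp
  ultimately have "4 dvd A' * A' + int m * B' * B'" by (simp add: coprime_dvd_mult_right_iff)
  then show "x \<in> {x \<in> OK m. x / of_nat q \<in> OK m}"
    using OK_intro_double_coords[OF AB'] x by blast
qed

lemma power_diff_in_Q: "x \<in> OK m \<Longrightarrow> y \<in> OK m \<Longrightarrow> x - y \<in> Q \<Longrightarrow> x ^ n - y ^ n \<in> Q"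
proof (induction n)
  case 0 then show ?case using of_int_in_Q_iff[of 0] by simp
next
  case (Suc n)
  have "x ^ Suc n - y ^ Suc n = (x ^ n - y ^ n) * x + (x - y) * y ^ n" by (simp add: algebra_simps)
  then show ?case using Q_add Q_mult_right Suc OK_power by metis
qed

lemma power_notin_Q: "x \<in> OK m \<Longrightarrow> x \<notin> Q \<Longrightarrow> x ^ n \<notin> Q"
  by (induction n) (use one_notin_Q Q_prime OK_power in auto)

end

lemma (in imag_quadratic) split_if_distinct_primes_over:
  assumes "prime_over_odd m Q1 q" "prime_over_odd m Q2 q" "Q1 \<noteq> Q2"
  shows "\<not> q dvd m" "\<exists>r::int. int q dvd r\<^sup>2 + int m"
proof -
  interpret Q1: prime_over_odd m Q1 q by fact
  interpret Q2: prime_over_odd m Q2 q by fact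
  show "\<not> q dvd m" using Q1.Q_eq_if_ramified Q2.Q_eq_if_ramified assms(3) by auto
  show "\<exists>r::int. int q dvd r\<^sup>2 + int m" using Q1.Q_eq_if_inert Q2.Q_eq_if_inert assms(3) by auto
qed

context prime_over_odd
begin

text \<open>A root of \<open>X\<^sup>2 + m\<close> modulo \<open>q\<close> selects the prime \<open>Q = (q, \<surd>-m - r)\<close>; shifting \<open>r\<close>
  by \<open>q\<close> if necessary makes \<open>r\<^sup>2 + m\<close> exactly divisible by \<open>q\<close>.\<close>

lemma obtain_split_root:
  assumes "\<not> q dvd m" "\<exists>r::int. int q dvd r\<^sup>2 + int m"
  obtains r :: int where "sqrt_neg m - of_int r \<in> Q" "int q dvd r\<^sup>2 + int m"
    "\<not> int q ^ 2 dvd r\<^sup>2 + int m" "\<not> int q dvd r"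
proof -
  obtain r0 where r0: "int q dvd r0\<^sup>2 + int m" using assms(2) by blast
  have "(sqrt_neg m - of_int r0) * (sqrt_neg m - of_int (- r0)) = of_int (- (r0\<^sup>2 + int m))"
    by (simp add: algebra_simps power2_eq_square)
  also have "\<dots> \<in> Q" by (simp only: of_int_in_Q_iff dvd_minus_iff r0)
  finally obtain r1 where r1: "sqrt_neg m - of_int r1 \<in> Q" "int q dvd r1\<^sup>2 + int m"
    using Q_prime OK_diff r0 by (metis OK_of_int power2_minus sqrt_neg_in_OK)
  have nr1: "\<not> int q dvd r1"
  proof
    assume "int q dvd r1"
    then have "int q dvd int m" using r1(2) by (simp add: dvd_add_right_iff power2_eq_square)
    then show False using assms(1) by simp
  qed
  show ?thesis
  proof (cases "int q ^ 2 dvd r1\<^sup>2 + int m")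
    case False then show ?thesis using that r1 nr1 by blast
  next
    case True
    have s: "sqrt_neg m - of_int (r1 + int q) \<in> Q" using Q_diff[OF r1(1) q_in_Q] by (simp add: algebra_simps)
    have e: "(r1 + int q)\<^sup>2 + int m = (r1\<^sup>2 + int m) + int q * (2 * r1) + int q ^ 2"
      by (simp add: power2_eq_square algebra_simps)
    have "\<not> int q ^ 2 dvd (r1 + int q)\<^sup>2 + int m"
    proof
      assume "int q ^ 2 dvd (r1 + int q)\<^sup>2 + int m"
      then have "int q * int q dvd int q * (2 * r1)"
        using True unfolding e by (simp add: dvd_add_right_iff dvd_add_left_iff power2_eq_square)
      then have "int q dvd 2 \<or> int q dvd r1" using prime_q q_gt_2 by (simp add: prime_dvd_mult_iff)
      then show False using nr1 q_gt_2 by (auto dest: zdvd_imp_le)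
    qed
    then show ?thesis using that[OF s] r1(2) nr1 unfolding e by simp
  qed
qed

end

section \<open>The valuation at a split prime\<close>

text \<open>\<open>Q\<close> contains \<open>\<pi> = \<surd>-m - r\<close>, while its conjugate \<open>\<tau> = \<surd>-m + r\<close> is a \<open>Q\<close>-unit and
  \<open>\<pi> \<tau> = -q j\<close> with \<open>q \<nmid> j\<close>. Hence \<open>\<tau>/q\<close> behaves like the inverse of a uniformizer:
  \<open>x \<in> Q\<^sup>e\<close> iff \<open>x (\<tau>/q)\<^sup>e\<close> is integral, which makes \<open>ordO\<close> computable.\<close>

locale split_prime = prime_over_odd +
  fixes r :: int
  assumes root_in_Q: "sqrt_neg m - of_int r \<in> Q"
    and q_dvd_norm_root: "int q dvd r\<^sup>2 + int m"
    and q_square_not_dvd_norm_root: "\<not> int q ^ 2 dvd r\<^sup>2 + int m"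
    and q_not_dvd_root: "\<not> int q dvd r"
begin

definition tau :: complex where "tau = sqrt_neg m + of_int r"

definition tau_cofactor :: int where "tau_cofactor = (r\<^sup>2 + int m) div int q"

lemma norm_root_eq: "r\<^sup>2 + int m = int q * tau_cofactor"
  using q_dvd_norm_root unfolding tau_cofactor_def by simp

lemma coprime_q_tau_cofactor: "coprime (int q) tau_cofactor"
proof -
  have "\<not> int q dvd tau_cofactor"
    using q_square_not_dvd_norm_root norm_root_eq by (auto simp: power2_eq_square)
  then show ?thesis using prime_q by (simp add: prime_imp_coprime)
qed

lemma tau_in_OK: "tau \<in> OK m"
  unfolding tau_def using OK_add by simp

lemma tau_notin_Q: "tau \<notin> Q"
proof
  assume "tau \<in> Q"
  then have "tau - (sqrt_neg m - of_int r) \<in> Q" using Q_diff root_in_Q by blast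
  then have "of_int (2 * r) \<in> Q" unfolding tau_def by simp
  then have "int q dvd 2 * r" using of_int_in_Q_iff by blast
  then have "int q dvd 2 \<or> int q dvd r" using prime_q by (simp add: prime_dvd_mult_iff)
  then show False using q_not_dvd_root q_gt_2 by (auto dest: zdvd_imp_le)
qed

lemma tau_nonzero: "tau \<noteq> 0"
  using tau_notin_Q of_int_in_Q_iff[of 0] by auto

lemma root_mult_tau: "(sqrt_neg m - of_int r) * tau = - of_nat q * of_int tau_cofactor"
proof -
  have "(sqrt_neg m - of_int r) * tau = - of_int (r\<^sup>2 + int m)"
    unfolding tau_def by (simp add: algebra_simps power2_eq_square)
  then show ?thesis unfolding norm_root_eq by simp
qed

lemma tau_mult_cnj: "tau * cnj tau = of_nat q * of_int tau_cofactor"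
proof -
  have "tau * cnj tau = of_int (r\<^sup>2 + int m)"
    unfolding tau_def by (simp add: algebra_simps power2_eq_square)
  then show ?thesis unfolding norm_root_eq by simp
qed

lemma OK_mod_Q:
  assumes x: "x \<in> OK m"
  obtains c b where "x = of_int c + (of_int b * (sqrt_neg m - of_int r) - of_nat q * x)"
proof -
  obtain A B where AB: "2 * x = of_int A + of_int B * sqrt_neg m" using OK_double_coords[OF x] by blast
  define h where "h = (int q + 1) div 2"
  have "x = of_int (h * A + h * B * r) + (of_int (h * B) * (sqrt_neg m - of_int r) - of_nat q * x)"
    using double_coords_mod_q[OF AB] unfolding h_def by (simp add: algebra_simps)
  then show ?thesis by (rule that)
qed

lemma OK_residue_of_int:
  assumes x: "x \<in> OK m" obtains c where "x - of_int c \<in> Q"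
proof -
  obtain c b where xe: "x = of_int c + (of_int b * (sqrt_neg m - of_int r) - of_nat q * x)"
    using OK_mod_Q[OF x] .
  have "x - of_int c = of_int b * (sqrt_neg m - of_int r) - of_nat q * x"
    by (subst xe) simp
  also have "\<dots> \<in> Q" by (rule Q_diff[OF Q_mult_left[OF root_in_Q OK_of_int] Q_mult_right[OF q_in_Q x]])
  finally show ?thesis by (rule that)
qed

lemma Q_mult_tau_div_q: assumes xQ: "x \<in> Q" shows "x * tau / of_nat q \<in> OK m"
proof -
  have x: "x \<in> OK m" using Q_subset_OK[OF xQ] .
  obtain c b where xe: "x = of_int c + (of_int b * (sqrt_neg m - of_int r) - of_nat q * x)"
    using OK_mod_Q[OF x] .
  have "of_int b * (sqrt_neg m - of_int r) - of_nat q * x \<in> Q"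
    by (rule Q_diff[OF Q_mult_left[OF root_in_Q OK_of_int] Q_mult_right[OF q_in_Q x]])
  then have "of_int c \<in> Q" using Q_diff[OF xQ] xe by (metis add_diff_cancel_right')
  then obtain c' where c': "c = int q * c'" using of_int_in_Q_iff by blast
  have "x * tau = of_int c * tau + of_int b * ((sqrt_neg m - of_int r) * tau) - of_nat q * x * tau"
    by (subst xe) (simp add: algebra_simps)
  also have "\<dots> = of_nat q * (of_int c' * tau - of_int b * of_int tau_cofactor - x * tau)"
    unfolding root_mult_tau c' by (simp add: algebra_simps)
  finally have "x * tau / of_nat q = of_int c' * tau - of_int b * of_int tau_cofactor - x * tau"
    using q_gt_2 by (simp add: field_simps)
  also have "\<dots> \<in> OK m" using OK_diff OK_mult tau_in_OK x OK_of_int by simp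
  finally show ?thesis .
qed

lemma ideal_pow_imp: "x \<in> ideal_pow m Q e \<Longrightarrow> x * tau ^ e / of_nat q ^ e \<in> OK m"
proof (induction e arbitrary: x)
  case (Suc e)
  have "x \<in> ideal_prod (OK_ring m) Q (ideal_pow m Q e)" using Suc.prems by simp
  then show ?case
  proof (induction x rule: ideal_prod.induct)
    case (prod a b)
    have "a \<otimes>\<^bsub>OK_ring m\<^esub> b = a * b" by simp
    moreover have "(a * b) * tau ^ Suc e / of_nat q ^ Suc e = (a * tau / of_nat q) * (b * tau ^ e / of_nat q ^ e)"
      by (simp add: field_simps)
    ultimately show ?case using OK_mult[OF Q_mult_tau_div_q[OF prod(1)] Suc.IH[OF prod(2)]] by argo
  next
    case (sum s1 s2)
    then show ?case using OK_add by (simp add: distrib_right add_divide_distrib)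
  qed
qed simp

text \<open>The converse uses \<open>\<pi>\<^sup>e \<tau>\<^sup>e = (-q j)\<^sup>e\<close> and a Bezout identity for \<open>q\<^sup>e\<close> and \<open>j\<^sup>e\<close>.\<close>

lemma ideal_pow_if:
  assumes x: "x \<in> OK m" and y: "x * tau ^ e / of_nat q ^ e \<in> OK m"
  shows "x \<in> ideal_pow m Q e"
proof -
  let ?\<pi> = "sqrt_neg m - of_int r" and ?j = "- tau_cofactor"
  have I: "ideal (ideal_pow m Q e) (OK_ring m)" using ideal_pow_ideal[OF ideal_Q] .
  have "?\<pi> ^ e * tau ^ e = of_nat q ^ e * of_int ?j ^ e"
    using root_mult_tau by (simp flip: power_mult_distrib)
  then have "?\<pi> ^ e * (x * tau ^ e / of_nat q ^ e) = x * of_int ?j ^ e"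
    using q_gt_2 by (simp add: field_simps)
  moreover have "?\<pi> ^ e * (x * tau ^ e / of_nat q ^ e) \<in> ideal_pow m Q e"
    using ideal_mult_right[OF I power_mem_ideal_pow[OF root_in_Q] y] .
  ultimately have xj: "x * of_int ?j ^ e \<in> ideal_pow m Q e" by simp
  have "gcd (int q ^ e) (?j ^ e) = 1" using coprime_q_tau_cofactor by simp
  then obtain a b where "a * int q ^ e + b * ?j ^ e = 1" by (metis bezout_int)
  then have "x = of_int (a * int q ^ e + b * ?j ^ e) * x" by simp
  also have "\<dots> = of_int a * (of_nat q ^ e * x) + of_int b * (x * of_int ?j ^ e)"
    by (simp add: algebra_simps)
  also have "\<dots> \<in> ideal_pow m Q e"
    by (rule ideal_add[OF I ideal_mult_left[OF I ideal_mult_right[OF I power_mem_ideal_pow[OF q_in_Q] x]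
          OK_of_int] ideal_mult_left[OF I xj OK_of_int]])
  finally show ?thesis .
qed

lemma ideal_pow_iff: "x \<in> OK m \<Longrightarrow> x \<in> ideal_pow m Q e \<longleftrightarrow> x * tau ^ e / of_nat q ^ e \<in> OK m"
  using ideal_pow_imp ideal_pow_if by blast

text \<open>Comparing norms, \<open>x \<in> Q\<^sup>e\<close> forces \<open>q\<^sup>e\<close> to divide the norm of \<open>x\<close>.\<close>

lemma ideal_pow_bounded:
  assumes x: "x \<in> OK m" "x \<noteq> 0" shows "\<exists>b. \<forall>e. x \<in> ideal_pow m Q e \<longrightarrow> e \<le> b"
proof -
  obtain Nx where Nx: "x * cnj x = of_int Nx" using OK_norm_Ints[OF x(1)] by (auto elim: Ints_cases)
  have Nx0: "Nx \<noteq> 0" using Nx x(2) by (metis complex_cnj_zero_iff mult_eq_0_iff of_int_0)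
  have "e \<le> nat \<bar>Nx\<bar>" if mem: "x \<in> ideal_pow m Q e" for e
  proof -
    define y where "y = x * tau ^ e / of_nat q ^ e"
    obtain Ny where Ny: "y * cnj y = of_int Ny"
      using OK_norm_Ints[OF ideal_pow_imp[OF mem]] unfolding y_def[symmetric] by (auto elim: Ints_cases)
    have "y * of_nat q ^ e = x * tau ^ e" unfolding y_def using q_gt_2 by simp
    then have "(y * cnj y) * of_nat q ^ e * of_nat q ^ e = (x * cnj x) * (tau * cnj tau) ^ e"
      by (metis (no_types, lifting) complex_cnj_mult complex_cnj_of_nat complex_cnj_power
          mult.assoc mult.left_commute power_mult_distrib)
    then have "of_int (Ny * int q ^ e * int q ^ e) = (of_int (Nx * int q ^ e * tau_cofactor ^ e) :: complex)"
      unfolding Ny Nx tau_mult_cnj by (simp add: power_mult_distrib algebra_simps)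
    then have "Ny * int q ^ e = Nx * tau_cofactor ^ e" using q_gt_2 by (simp only: of_int_eq_iff) simp
    then have "int q ^ e dvd Nx * tau_cofactor ^ e" by (metis dvd_triv_right)
    then have "int q ^ e dvd Nx" using coprime_q_tau_cofactor by (simp add: coprime_dvd_mult_left_iff)
    then have "int q ^ e \<le> \<bar>Nx\<bar>" using dvd_imp_le_int[OF Nx0] by fastforce
    moreover have "int e < int q ^ e"
      using less_le_trans[OF less_exp power_mono[of 2 q e]] q_gt_2 by (simp flip: of_nat_power)
    ultimately show ?thesis by linarith
  qed
  then show ?thesis by blast
qed

lemma mem_ideal_pow_iff_le_ordO:
  assumes x: "x \<in> OK m" "x \<noteq> 0" shows "x \<in> ideal_pow m Q e \<longleftrightarrow> e \<le> ordO m Q x"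
proof -
  obtain b where b: "\<And>e. x \<in> ideal_pow m Q e \<Longrightarrow> e \<le> b" using ideal_pow_bounded[OF x] by blast
  have x0: "x \<in> ideal_pow m Q 0" using x by simp
  have G: "x \<in> ideal_pow m Q (ordO m Q x)"
    unfolding ordO_def by (rule GreatestI_nat[of "\<lambda>e. x \<in> ideal_pow m Q e", OF x0 b])
  show ?thesis
  proof
    assume "x \<in> ideal_pow m Q e"
    then show "e \<le> ordO m Q x"
      unfolding ordO_def by (rule Greatest_le_nat[of "\<lambda>e. x \<in> ideal_pow m Q e", OF _ b])
  qed (use ideal_pow_antimono[OF ideal_Q] G in blast)
qed

lemma le_ordO_iff:
  "x \<in> OK m \<Longrightarrow> x \<noteq> 0 \<Longrightarrow> e \<le> ordO m Q x \<longleftrightarrow> x * tau ^ e / of_nat q ^ e \<in> OK m"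
  using mem_ideal_pow_iff_le_ordO ideal_pow_iff by blast

lemma ordO_pos_iff: "x \<in> OK m \<Longrightarrow> x \<noteq> 0 \<Longrightarrow> 1 \<le> ordO m Q x \<longleftrightarrow> x \<in> Q"
  using mem_ideal_pow_iff_le_ordO[of x 1] ideal_pow_1[OF ideal_Q] by simp

lemma ordO_1: "ordO m Q 1 = 0"
  using ordO_pos_iff[of 1] one_notin_Q by simp

lemma unit_part_notin_Q:
  assumes x: "x \<in> OK m" "x \<noteq> 0"
  shows "x * tau ^ ordO m Q x / of_nat q ^ ordO m Q x \<in> OK m - Q"
proof -
  let ?a = "ordO m Q x"
  have "x * tau ^ ?a / of_nat q ^ ?a \<in> OK m" using le_ordO_iff[OF x] by blast
  moreover have "x * tau ^ ?a / of_nat q ^ ?a \<notin> Q"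
  proof
    assume "x * tau ^ ?a / of_nat q ^ ?a \<in> Q"
    then have "x * tau ^ ?a / of_nat q ^ ?a * tau / of_nat q \<in> OK m" by (rule Q_mult_tau_div_q)
    then have "Suc ?a \<le> ?a" using le_ordO_iff[OF x, of "Suc ?a"] by (simp add: field_simps)
    then show False by simp
  qed
  ultimately show ?thesis by blast
qed

lemma ordO_add:
  assumes "x \<in> OK m" "x \<noteq> 0" "y \<in> OK m" "y \<noteq> 0" "x + y \<noteq> 0"
  shows "min (ordO m Q x) (ordO m Q y) \<le> ordO m Q (x + y)"
proof -
  let ?e = "min (ordO m Q x) (ordO m Q y)"
  have "x \<in> ideal_pow m Q ?e" "y \<in> ideal_pow m Q ?e" using mem_ideal_pow_iff_le_ordO assms by auto
  then have "x + y \<in> ideal_pow m Q ?e" using ideal_add[OF ideal_pow_ideal[OF ideal_Q]] by blast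
  then show ?thesis using mem_ideal_pow_iff_le_ordO assms OK_add by blast
qed

lemma ordO_mult:
  assumes x: "x \<in> OK m" "x \<noteq> 0" and y: "y \<in> OK m" "y \<noteq> 0"
  shows "ordO m Q (x * y) = ordO m Q x + ordO m Q y"
proof -
  define a b where "a = ordO m Q x" and "b = ordO m Q y"
  define x1 y1 where "x1 = x * tau ^ a / of_nat q ^ a" and "y1 = y * tau ^ b / of_nat q ^ b"
  have x1: "x1 \<in> OK m" "x1 \<notin> Q" and y1: "y1 \<in> OK m" "y1 \<notin> Q"
    using unit_part_notin_Q[OF x] unit_part_notin_Q[OF y] unfolding x1_def y1_def a_def b_def by auto
  have xy: "x * y \<in> OK m" "x * y \<noteq> 0" using x y OK_mult by auto
  have e: "x * y * tau ^ (a + b) / of_nat q ^ (a + b) = x1 * y1"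
    unfolding x1_def y1_def by (simp add: field_simps power_add)
  have "\<not> Suc (a + b) \<le> ordO m Q (x * y)"
  proof
    assume "Suc (a + b) \<le> ordO m Q (x * y)"
    then have "x * y * tau ^ Suc (a + b) / of_nat q ^ Suc (a + b) \<in> OK m"
      using le_ordO_iff[OF xy] by blast
    moreover have "x * y * tau ^ Suc (a + b) / of_nat q ^ Suc (a + b) = x1 * y1 * tau / of_nat q"
      unfolding e[symmetric] by (simp add: field_simps)
    ultimately have "x1 * y1 * tau / of_nat q \<in> OK m" by simp
    then have "of_nat q * (x1 * y1 * tau / of_nat q) \<in> Q" using Q_mult_right[OF q_in_Q] by blast
    then have "x1 * y1 * tau \<in> Q" using q_gt_2 by simp
    then show False using Q_prime OK_mult x1 y1 tau_in_OK tau_notin_Q by meson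
  qed
  moreover have "a + b \<le> ordO m Q (x * y)" using le_ordO_iff[OF xy] e OK_mult[OF x1(1) y1(1)] by simp
  ultimately show ?thesis unfolding a_def b_def by simp
qed

lemma ordK_divide:
  assumes a: "a \<in> OK m" "a \<noteq> 0" and b: "b \<in> OK m" "b \<noteq> 0"
  shows "ordK m Q (a / b) = int (ordO m Q a) - int (ordO m Q b)"
proof -
  let ?P = "\<lambda>e. \<exists>a' b'. a' \<in> OK m - {0} \<and> b' \<in> OK m - {0} \<and> a / b = a' / b'
                     \<and> e = int (ordO m Q a') - int (ordO m Q b')"
  have "\<exists>e. ?P e" using a b by blast
  then obtain a' b' where w: "a' \<in> OK m - {0}" "b' \<in> OK m - {0}" "a / b = a' / b'"
     "ordK m Q (a / b) = int (ordO m Q a') - int (ordO m Q b')"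
    using someI_ex[of ?P] unfolding ordK_def by blast
  have "a * b' = a' * b" using w(1,2,3) b by (simp add: field_simps)
  then have "ordO m Q a + ordO m Q b' = ordO m Q a' + ordO m Q b"
    using ordO_mult w(1,2) a b by (metis DiffD1 DiffD2 insertI1)
  then show ?thesis using w(4) by simp
qed

lemma ordK_OK: "x \<in> OK m \<Longrightarrow> x \<noteq> 0 \<Longrightarrow> ordK m Q x = int (ordO m Q x)"
  using ordK_divide[of x 1] ordO_1 by simp

lemma ordK_mult:
  assumes "x \<in> QF m" "x \<noteq> 0" "y \<in> QF m" "y \<noteq> 0"
  shows "ordK m Q (x * y) = ordK m Q x + ordK m Q y"
proof -
  obtain a b c d where ab: "a \<in> OK m - {0}" "b \<in> OK m - {0}" "x = a / b"
    and cd: "c \<in> OK m - {0}" "d \<in> OK m - {0}" "y = c / d"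
    using QF_quotient_of_OK assms by metis
  have "x * y = (a * c) / (b * d)" using ab cd by simp
  then show ?thesis using ordK_divide ab cd OK_mult ordO_mult by simp
qed

lemma ordK_add:
  assumes "x \<in> QF m" "x \<noteq> 0" "y \<in> QF m" "y \<noteq> 0" "x + y \<noteq> 0"
  shows "min (ordK m Q x) (ordK m Q y) \<le> ordK m Q (x + y)"
proof -
  obtain a b c d where ab: "a \<in> OK m - {0}" "b \<in> OK m - {0}" "x = a / b"
    and cd: "c \<in> OK m - {0}" "d \<in> OK m - {0}" "y = c / d"
    using QF_quotient_of_OK assms by metis
  have e: "x + y = (a * d + c * b) / (b * d)" using ab cd by (simp add: field_simps)
  have nz: "a * d + c * b \<noteq> 0" using e assms(5) by auto
  have O: "a * d \<in> OK m" "c * b \<in> OK m" "b * d \<in> OK m" using ab cd OK_mult by auto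
  have "ordK m Q (x + y) = int (ordO m Q (a * d + c * b)) - int (ordO m Q (b * d))"
    using ordK_divide[OF OK_add[OF O(1,2)] nz O(3)] ab cd e by simp
  moreover have "min (ordO m Q (a * d)) (ordO m Q (c * b)) \<le> ordO m Q (a * d + c * b)"
    using ordO_add[OF O(1) _ O(2) _ nz] ab cd by simp
  ultimately show ?thesis using ab cd ordO_mult ordK_divide by auto
qed

lemma ordK_inverse:
  assumes "x \<in> QF m" "x \<noteq> 0" shows "ordK m Q (inverse x) = - ordK m Q x"
proof -
  obtain a b where "a \<in> OK m - {0}" "b \<in> OK m - {0}" "x = a / b"
    using QF_quotient_of_OK assms by metis
  then show ?thesis using ordK_divide[of a b] ordK_divide[of b a] by simp
qed

lemma ordK_power: "x \<in> QF m \<Longrightarrow> x \<noteq> 0 \<Longrightarrow> ordK m Q (x ^ n) = int n * ordK m Q x"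
  by (induction n) (simp_all add: ordK_OK ordO_1 ordK_mult QF_power algebra_simps)

lemma fermat_mod_Q:
  assumes x: "x \<in> OK m" "x \<notin> Q" shows "x ^ (q - 1) - 1 \<in> Q"
proof -
  obtain c where c: "x - of_int c \<in> Q" using OK_residue_of_int[OF x(1)] .
  have "\<not> int q dvd c"
  proof
    assume "int q dvd c"
    then have "(x - of_int c) + of_int c \<in> Q" using Q_add c of_int_in_Q_iff by blast
    then show False using x by simp
  qed
  define a where "a = nat (c mod int q)"
  have a: "int a = c mod int q" unfolding a_def using q_gt_2 by simp
  have "\<not> q dvd a"
  proof
    assume "q dvd a"
    then have "int q dvd c mod int q" unfolding a[symmetric] by simp
    then show False using \<open>\<not> int q dvd c\<close> by (simp add: dvd_mod_iff)
  qed
  then have "[int a ^ (q - 1) = 1] (mod int q)"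
    using fermat_theorem[OF prime_q] by (metis cong_int_iff of_nat_1 of_nat_power)
  moreover have "[c ^ (q - 1) = int a ^ (q - 1)] (mod int q)"
    unfolding a by (simp add: cong_pow cong_mod_right)
  ultimately have "[c ^ (q - 1) = 1] (mod int q)" using cong_trans by blast
  then have "of_int (c ^ (q - 1) - 1) \<in> Q" by (simp only: cong_iff_dvd_diff of_int_in_Q_iff)
  moreover have "x ^ (q - 1) - of_int c ^ (q - 1) \<in> Q" using power_diff_in_Q[OF x(1) OK_of_int c] .
  ultimately have "(x ^ (q - 1) - of_int c ^ (q - 1)) + of_int (c ^ (q - 1) - 1) \<in> Q" using Q_add by blast
  then show ?thesis by simp
qed

end

section \<open>Congruences modulo a split prime\<close>

context split_prime
begin

definition Q_integral :: "complex \<Rightarrow> bool" where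
  "Q_integral x \<longleftrightarrow> x = 0 \<or> 0 \<le> ordK m Q x"

lemma congP_zero_iff: "congP m Q x 0 \<longleftrightarrow> x = 0 \<or> 1 \<le> ordK m Q x"
  unfolding congP_def by simp

lemma congP_diff_zero_iff: "congP m Q (x - y) 0 \<longleftrightarrow> congP m Q x y"
  unfolding congP_def by simp

lemma Q_integral_if_congP_zero: "congP m Q x 0 \<Longrightarrow> Q_integral x"
  unfolding congP_zero_iff Q_integral_def by auto

lemma Q_integral_OK: "x \<in> OK m \<Longrightarrow> Q_integral x"
  unfolding Q_integral_def by (cases "x = 0") (auto simp: ordK_OK)

lemma congP_zero_if_in_Q: "x \<in> Q \<Longrightarrow> congP m Q x 0"
  unfolding congP_zero_iff using ordK_OK ordO_pos_iff Q_subset_OK by fastforce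

lemma Q_integral_unit: "ordK m Q u = 0 \<Longrightarrow> Q_integral u"
  unfolding Q_integral_def by simp

lemma Q_integral_add:
  "x \<in> QF m \<Longrightarrow> y \<in> QF m \<Longrightarrow> Q_integral x \<Longrightarrow> Q_integral y \<Longrightarrow> Q_integral (x + y)"
  unfolding Q_integral_def using ordK_add[of x y] by (cases "x = 0"; cases "y = 0"; cases "x + y = 0") auto

lemma congP_zero_add:
  "x \<in> QF m \<Longrightarrow> y \<in> QF m \<Longrightarrow> congP m Q x 0 \<Longrightarrow> congP m Q y 0 \<Longrightarrow> congP m Q (x + y) 0"
  unfolding congP_zero_iff using ordK_add[of x y] by (cases "x = 0"; cases "y = 0"; cases "x + y = 0") auto

lemma Q_integral_mult:
  "x \<in> QF m \<Longrightarrow> y \<in> QF m \<Longrightarrow> Q_integral x \<Longrightarrow> Q_integral y \<Longrightarrow> Q_integral (x * y)"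
  unfolding Q_integral_def using ordK_mult[of x y] by (cases "x = 0"; cases "y = 0") auto

lemma congP_zero_mult:
  "x \<in> QF m \<Longrightarrow> y \<in> QF m \<Longrightarrow> congP m Q x 0 \<Longrightarrow> Q_integral y \<Longrightarrow> congP m Q (x * y) 0"
  unfolding congP_zero_iff Q_integral_def using ordK_mult[of x y] by (cases "x = 0"; cases "y = 0") auto

lemma Q_integral_power: "x \<in> QF m \<Longrightarrow> Q_integral x \<Longrightarrow> Q_integral (x ^ n)"
  by (induction n) (simp_all add: Q_integral_OK Q_integral_mult QF_power)

lemma congP_zero_power: "x \<in> QF m \<Longrightarrow> congP m Q x 0 \<Longrightarrow> n > 0 \<Longrightarrow> congP m Q (x ^ n) 0"
  by (induction n) (auto simp: congP_zero_mult Q_integral_power Q_integral_if_congP_zero QF_power)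

lemma Q_integral_of_power:
  assumes "x \<in> QF m" "n > 0" "Q_integral (x ^ n)" shows "Q_integral x"
proof (cases "x = 0")
  case False
  then have "0 \<le> int n * ordK m Q x" using assms ordK_power[of x n] unfolding Q_integral_def by simp
  then show ?thesis using assms(2) unfolding Q_integral_def by (simp add: zero_le_mult_iff)
qed (simp add: Q_integral_def)

lemma congP_zero_divide_unit:
  assumes "x \<in> QF m" "u \<in> QF m" "u \<noteq> 0" "ordK m Q u = 0" "congP m Q x 0"
  shows "congP m Q (x / u) 0"
  using congP_zero_mult[OF assms(1) QF_inverse[OF assms(2)] assms(5)] ordK_inverse[OF assms(2,3)] assms(4)
  by (simp add: divide_inverse Q_integral_unit)

lemma congP_trans:
  assumes "x \<in> QF m" "y \<in> QF m" "z \<in> QF m" "congP m Q x y" "congP m Q y z"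
  shows "congP m Q x z"
proof -
  have "congP m Q ((x - y) + (y - z)) 0"
    using congP_zero_add[OF QF_diff[OF assms(1,2)] QF_diff[OF assms(2,3)]] assms(4,5)
    by (simp add: congP_diff_zero_iff)
  then show ?thesis by (simp add: congP_diff_zero_iff)
qed

lemma Q_integral_if_congP:
  assumes "x \<in> QF m" "y \<in> QF m" "congP m Q x y" "Q_integral y" shows "Q_integral x"
proof -
  have "Q_integral ((x - y) + y)"
    using Q_integral_add[OF QF_diff[OF assms(1,2)] assms(2) Q_integral_if_congP_zero] assms(3,4)
    by (simp add: congP_diff_zero_iff)
  then show ?thesis by simp
qed

lemma congP_power:
  assumes a: "a \<in> QF m" "Q_integral a" and b: "b \<in> QF m" "Q_integral b" and ab: "congP m Q a b"
  shows "congP m Q (a ^ n) (b ^ n)"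
proof (induction n)
  case (Suc n)
  have "congP m Q ((a ^ n - b ^ n) * a) 0"
    using Suc congP_zero_mult[OF QF_diff[OF QF_power QF_power] a(1) _ a(2)] a(1) b(1)
    by (simp add: congP_diff_zero_iff)
  moreover have "congP m Q ((a - b) * b ^ n) 0"
    using ab congP_zero_mult[OF QF_diff[OF a(1) b(1)] QF_power[OF b(1)] _ Q_integral_power[OF b]]
    by (simp add: congP_diff_zero_iff)
  ultimately have "congP m Q ((a ^ n - b ^ n) * a + (a - b) * b ^ n) 0"
    using congP_zero_add QF_mult QF_diff QF_power a(1) b(1) by presburger
  moreover have "(a ^ n - b ^ n) * a + (a - b) * b ^ n = a ^ Suc n - b ^ Suc n"
    by (simp add: algebra_simps)
  ultimately show ?case by (simp add: congP_diff_zero_iff)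
qed (simp add: congP_def)

text \<open>Writing \<open>x\<close> as a quotient of two elements of \<open>O - Q\<close> reduces this to Fermat's little
  theorem in \<open>O/Q \<cong> \<int>/q\<close>.\<close>

lemma fermat_congP:
  assumes "x \<in> QF m" "x \<noteq> 0" "ordK m Q x = 0" shows "congP m Q (x ^ (q - 1)) 1"
proof -
  obtain a b where a: "a \<in> OK m" "a \<noteq> 0" and b: "b \<in> OK m" "b \<noteq> 0" and x: "x = a / b"
    using QF_quotient_of_OK[OF assms(1,2)] by blast
  have e: "ordO m Q a = ordO m Q b" using ordK_divide[OF a b] assms(3) x by simp
  define e1 where "e1 = ordO m Q a"
  define a1 b1 where "a1 = a * tau ^ e1 / of_nat q ^ e1" and "b1 = b * tau ^ e1 / of_nat q ^ e1"
  have a1: "a1 \<in> OK m" "a1 \<notin> Q" and b1: "b1 \<in> OK m" "b1 \<notin> Q"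
    using unit_part_notin_Q[OF a] unit_part_notin_Q[OF b] e unfolding a1_def b1_def e1_def by auto
  have b1_nz: "b1 \<noteq> 0" using b1 of_int_in_Q_iff[of 0] by auto
  have x1: "x = a1 / b1" using a b tau_nonzero q_gt_2 unfolding x a1_def b1_def by (simp add: field_simps)
  have x_eq: "x ^ (q - 1) - 1 = ((a1 ^ (q - 1) - 1) - (b1 ^ (q - 1) - 1)) / b1 ^ (q - 1)"
    using b1_nz unfolding x1 by (simp add: power_divide diff_divide_distrib)
  have b1q: "b1 ^ (q - 1) \<in> OK m" "b1 ^ (q - 1) \<noteq> 0" "b1 ^ (q - 1) \<notin> Q"
    using OK_power power_notin_Q b1 b1_nz by auto
  then have "ordK m Q (b1 ^ (q - 1)) = 0" using ordK_OK[OF b1q(1,2)] ordO_pos_iff[OF b1q(1,2)] by simp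
  moreover have "(a1 ^ (q - 1) - 1) - (b1 ^ (q - 1) - 1) \<in> Q" using Q_diff fermat_mod_Q a1 b1 by blast
  ultimately have "congP m Q (((a1 ^ (q - 1) - 1) - (b1 ^ (q - 1) - 1)) / b1 ^ (q - 1)) 0"
    using congP_zero_divide_unit congP_zero_if_in_Q Q_subset_OK OK_QF b1q(1,2) by blast
  then show ?thesis unfolding x_eq[symmetric] congP_diff_zero_iff .
qed

lemma congP_power_zero_or_one:
  fixes v n l k \<zeta> :: nat and \<sigma> :: int and eps \<eta> :: complex
  defines "w \<equiv> (of_nat v * of_nat \<zeta> + of_nat n * sqrt_neg m) / eps"
  assumes eps: "eps \<in> QF m" "eps \<noteq> 0" "ordK m Q eps = 0" and \<eta>: "\<eta> \<in> QF m"
    and eq: "of_nat v * of_int \<sigma> ^ l + of_nat n * sqrt_neg m = eps * \<eta> ^ l"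
    and l: "l > 0" and n: "n > 0" and k: "k > 0" and qkl: "q = 2 * k * l + 1"
    and \<zeta>: "int q dvd \<sigma> ^ l - int \<zeta>"
  shows "congP m Q (w ^ (2 * k)) 0 \<or> congP m Q (w ^ (2 * k)) 1"
proof -
  define A where "A = of_nat v * of_int \<sigma> ^ l + of_nat n * sqrt_neg m"
  have A: "A \<in> OK m" "A \<noteq> 0"
    unfolding A_def using OK_add OK_mult OK_power of_int_add_sqrt_neg_nonzero[OF n m_pos, of "int v * \<sigma> ^ l"]
    by simp_all
  have \<eta>l: "\<eta> ^ l = A / eps" unfolding A_def eq using eps by simp
  have \<eta>_nz: "\<eta> \<noteq> 0" using A \<eta>l l eps(2) by (auto simp: zero_power)
  have QF: "w \<in> QF m" "\<eta> ^ l \<in> QF m"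
    unfolding w_def using QF_divide QF_add QF_mult QF_of_nat sqrt_neg_in_QF eps QF_power \<eta> by auto
  have \<eta>l_int: "Q_integral (\<eta> ^ l)"
    using Q_integral_mult[OF OK_QF[OF A(1)] QF_inverse[OF eps(1)] Q_integral_OK[OF A(1)]] \<eta>l
      ordK_inverse[OF eps(1,2)] eps(3) by (simp add: divide_inverse Q_integral_unit)
  then have \<eta>_int: "Q_integral \<eta>" using Q_integral_of_power \<eta> l by blast
  have "of_int (int v * (int \<zeta> - \<sigma> ^ l)) \<in> Q"
    using \<zeta> of_int_in_Q_iff by (metis dvd_mult dvd_minus_iff minus_diff_eq)
  then have "congP m Q (of_int (int v * (int \<zeta> - \<sigma> ^ l)) / eps) 0"
    using congP_zero_divide_unit[OF QF_of_int eps] congP_zero_if_in_Q by blast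
  moreover have "of_int (int v * (int \<zeta> - \<sigma> ^ l)) / eps = w - \<eta> ^ l"
    unfolding w_def \<eta>l A_def using eps(2) by (simp add: field_simps)
  ultimately have "congP m Q (w - \<eta> ^ l) 0" by simp
  then have w_cong: "congP m Q w (\<eta> ^ l)" by (simp only: congP_diff_zero_iff)
  show ?thesis
  proof (cases "congP m Q \<eta> 0")
    case True
    then have "congP m Q w 0"
      using congP_trans[OF QF QF_of_nat[of 0, simplified]] congP_zero_power[OF \<eta> _ l] w_cong by blast
    then show ?thesis using congP_zero_power[OF QF(1)] k by simp
  next
    case False
    then have "ordK m Q \<eta> = 0" using \<eta>_int \<eta>_nz unfolding Q_integral_def congP_zero_iff by simp
    then have "congP m Q ((\<eta> ^ l) ^ (2 * k)) 1"
      using fermat_congP[OF \<eta> \<eta>_nz] qkl by (simp add: ac_simps flip: power_mult)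
    moreover have "congP m Q (w ^ (2 * k)) ((\<eta> ^ l) ^ (2 * k))"
      using congP_power[OF QF(1) Q_integral_if_congP[OF QF w_cong \<eta>l_int] QF(2) \<eta>l_int w_cong] .
    ultimately show ?thesis using congP_trans[OF QF_power QF_power QF_1] QF by blast
  qed
qed

end

lemma (in prime_over_odd) obtain_split_prime:
  assumes "\<not> q dvd m" "\<exists>r::int. int q dvd r\<^sup>2 + int m"
  obtains r where "split_prime m Q q r"
  using obtain_split_root[OF assms] prime_over_odd_axioms
  by (metis split_prime.intro split_prime_axioms.intro)

lemma (in ring) genideal_eq_ideal_prod_imp_mem:
  assumes "a \<in> carrier R" "ideal I R" "ideal J R" "genideal R {a} = ideal_prod R I J"
  shows "a \<in> I \<inter> J"
  using genideal_self'[OF assms(1)] ideal_prod_inter[OF assms(2,3)] assms(4) by auto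

lemma obtain_power_residue_in_chi:
  fixes \<sigma> :: int assumes "q > 0"
  obtains \<zeta> where "\<zeta> \<in> chi l q" "int q dvd \<sigma> ^ l - int \<zeta>"
proof
  let ?\<zeta> = "nat (\<sigma> mod int q) ^ l mod q"
  show "?\<zeta> \<in> chi l q" unfolding chi_def using assms by (auto simp: nat_less_iff)
  have "int ?\<zeta> = \<sigma> ^ l mod int q" using assms by (simp add: of_nat_mod power_mod)
  then show "int q dvd \<sigma> ^ l - int ?\<zeta>" by (simp add: mod_eq_dvd_iff)
qed

theorem lemma9p2:
  fixes l R S T v u m n q k :: nat and eps :: complex and q1 q2 :: "complex set"
  assumes "prime l"
    and "R > 0" "S > 0" "T > 0"
    and "coprime R S" "coprime R T" "coprime S T"
    and "v > 0" "S * Sprime S = v ^ 2"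
    and "u = R * Sprime S"
    and "squarefree m" "m > 0" "n > 0" "T * Sprime S = m * n ^ 2"
    and "in_E l m n u eps"
    and "k > 0" "q = 2 * k * l + 1" "prime q"
    and "prime_ideal_OK m q1" "prime_ideal_OK m q2" "q1 \<noteq> q2"
    and "genideal (OK_ring m) {complex_of_nat q} = ideal_prod (OK_ring m) q1 q2"
    and "ordK m q1 eps = 0" "ordK m q2 eps = 0"
    and "Cset l q k m n v eps q1 q2 = {}"
  shows "\<not> (\<exists>(\<sigma>::int) \<eta>. \<eta> \<in> QF m \<and>
            complex_of_nat v * complex_of_int \<sigma> ^ l + complex_of_nat n * sqrt_neg m = eps * \<eta> ^ l)"
proof
  assume "\<exists>(\<sigma>::int) \<eta>. \<eta> \<in> QF m \<and>
            complex_of_nat v * complex_of_int \<sigma> ^ l + complex_of_nat n * sqrt_neg m = eps * \<eta> ^ l"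
  then obtain \<sigma> :: int and \<eta> where \<eta>: "\<eta> \<in> QF m"
    and eq: "of_nat v * of_int \<sigma> ^ l + of_nat n * sqrt_neg m = eps * \<eta> ^ l" by blast
  have p: "primeideal q1 (OK_ring m)" "primeideal q2 (OK_ring m)"
    using assms(19,20) unfolding prime_ideal_OK_def by blast+
  have "cring (OK_ring m)" using p(1) unfolding primeideal_def by blast
  then interpret imag_quadratic m using assms(11,12) by (simp add: imag_quadratic_def)
  have "of_nat q \<in> q1 \<inter> q2"
    using ring.genideal_eq_ideal_prod_imp_mem[OF ring_OK _ _ _ assms(22)] p
    unfolding primeideal_def by simp
  then have over: "prime_over_odd m q1 q" "prime_over_odd m q2 q"
    using p assms(17,18)
    by (auto intro!: prime_over_odd.intro prime_over_odd_axioms.intro imag_quadratic_axioms)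
  obtain r1 r2 where "split_prime m q1 q r1" "split_prime m q2 q r2"
    using over split_if_distinct_primes_over[OF over assms(21)] prime_over_odd.obtain_split_prime
    by metis
  then interpret Q1: split_prime m q1 q r1 + Q2: split_prime m q2 q r2 .
  obtain \<zeta> where \<zeta>: "\<zeta> \<in> chi l q" "int q dvd \<sigma> ^ l - int \<zeta>"
    using obtain_power_residue_in_chi[of q] assms(18) prime_gt_0_nat by blast
  have "eps \<in> QF m" "eps \<noteq> 0" using assms(15) unfolding in_E_def by auto
  then have "\<zeta> \<in> Cset l q k m n v eps q1 q2"
    unfolding Cset_def
    using \<zeta> Q1.congP_power_zero_or_one[OF _ _ assms(23) \<eta> eq _ assms(13,16,17) \<zeta>(2)]
      Q2.congP_power_zero_or_one[OF _ _ assms(24) \<eta> eq _ assms(13,16,17) \<zeta>(2)]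
      prime_gt_0_nat[OF assms(1)] by auto
  then show False using assms(25) by simp
qed

end
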